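(* Let $k\geq 2$, let $G$ be a graph with $G\in\mathcal{R}_k$, and let $x\in V(G)$. Let $G'$ be the graph obtained from $G$ by adding a new vertex $y\notin V(G)$ and the edge $(x,y)$. Then $G'\in\mathcal{R}_k$.
   Context: All graphs are finite and simple. For a word $w$ and distinct letters $x,y$ occurring in $w$, $x$ and $y$ alternate in $w$ if deleting all letters other than copies of $x$ and $y$ yields a word of the form $xyxy\cdots$ or $yxyx\cdots$ (of even or odd length). A graph $G=(V,E)$ is word-representable if there is a word $w$ over $V$ (each vertex occurring in $w$) such that for all distinct $x,y\in V$, $x$ and $y$ alternate in $w$ iff $(x,y)\in E$. A word is $k$-uniform if each letter occurs exactly $k$ times; $G$ is $k$-word-representable if some $k$-uniform word represents it. The representation number $\mathcal{R}(G)$ is the least such $k$, and $\mathcal{R}_k$ is the class of word-representable graphs with representation number exactly $k$. *)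

theory Defs
  imports Main
begin

definition simple_graph :: "'a set \<Rightarrow> ('a \<Rightarrow> 'a \<Rightarrow> bool) \<Rightarrow> bool" where
  "simple_graph V E \<longleftrightarrow> finite V \<and> (\<forall>a b. E a b \<longrightarrow> a \<in> V \<and> b \<in> V)
     \<and> (\<forall>a b. E a b \<longrightarrow> E b a) \<and> (\<forall>a. \<not> E a a)"

definition alternates :: "'a list \<Rightarrow> 'a \<Rightarrow> 'a \<Rightarrow> bool" where
  "alternates w x y \<longleftrightarrow>
     (let u = filter (\<lambda>z. z = x \<or> z = y) w in \<forall>i. Suc i < length u \<longrightarrow> u ! i \<noteq> u ! Suc i)"

definition represents :: "'a set \<Rightarrow> ('a \<Rightarrow> 'a \<Rightarrow> bool) \<Rightarrow> 'a list \<Rightarrow> bool" where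
  "represents V E w \<longleftrightarrow> set w = V \<and>
     (\<forall>x\<in>V. \<forall>y\<in>V. x \<noteq> y \<longrightarrow> (alternates w x y \<longleftrightarrow> E x y))"

definition word_representable :: "'a set \<Rightarrow> ('a \<Rightarrow> 'a \<Rightarrow> bool) \<Rightarrow> bool" where
  "word_representable V E \<longleftrightarrow> (\<exists>w. represents V E w)"

definition uniform :: "nat \<Rightarrow> 'a list \<Rightarrow> bool" where
  "uniform k w \<longleftrightarrow> (\<forall>v\<in>set w. count_list w v = k)"

definition k_word_representable :: "nat \<Rightarrow> 'a set \<Rightarrow> ('a \<Rightarrow> 'a \<Rightarrow> bool) \<Rightarrow> bool" where
  "k_word_representable k V E \<longleftrightarrow> (\<exists>w. uniform k w \<and> represents V E w)"

definition rep_number :: "'a set \<Rightarrow> ('a \<Rightarrow> 'a \<Rightarrow> bool) \<Rightarrow> nat" where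
  "rep_number V E = (LEAST k. k_word_representable k V E)"

definition in_R :: "nat \<Rightarrow> 'a set \<Rightarrow> ('a \<Rightarrow> 'a \<Rightarrow> bool) \<Rightarrow> bool" where
  "in_R k V E \<longleftrightarrow> word_representable V E \<and> rep_number V E = k"

end

theory Submission
  imports Defs
begin

text \<open>Let \<open>w\<close> be a \<open>k\<close>-uniform word representing \<open>G\<close> and split it as
\<open>w = a x s x t\<close> at the first and last occurrence of \<open>x\<close>. The word
\<open>a y x y s' x t\<close>, where \<open>s'\<close> arises from \<open>s\<close> by writing \<open>y\<close> after every \<open>x\<close>,
is again \<open>k\<close>-uniform; its \<open>x,y\<close>-subword is \<open>y x y x \<dots> y x\<close>, while \<open>y y\<close> occurs in
its \<open>y,z\<close>-subword for every other \<open>z\<close>, and deleting \<open>y\<close> gives back \<open>w\<close>. So it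
represents \<open>G'\<close>; for a non-uniform \<open>w\<close> the same works with \<open>x t\<close> omitted from the split.
Conversely deleting \<open>y\<close> from a uniform word representing \<open>G'\<close>
gives one of \<open>G\<close> with the same multiplicity. Hence \<open>G\<close> and \<open>G'\<close> are
\<open>j\<close>-representable for the same \<open>j \<ge> 2\<close>, and their representation numbers agree.
The hypothesis \<open>k \<ge> 2\<close> is needed because a \<open>1\<close>-uniform word only represents
complete graphs.\<close>

definition add_edge :: "('a \<Rightarrow> 'a \<Rightarrow> bool) \<Rightarrow> 'a \<Rightarrow> 'a \<Rightarrow> 'a \<Rightarrow> 'a \<Rightarrow> bool" where
  "add_edge E x y = (\<lambda>a b. E a b \<or> (a = x \<and> b = y) \<or> (a = y \<and> b = x))"

lemma alternates_iff_distinct_adj: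
  "alternates w a b \<longleftrightarrow> distinct_adj (filter (\<lambda>z. z = a \<or> z = b) w)"
  by (simp add: alternates_def distinct_adj_conv_nth Let_def)

lemma alternates_commute: "alternates w a b \<longleftrightarrow> alternates w b a"
  by (simp add: alternates_iff_distinct_adj disj_commute)

lemma alternates_filter:
  assumes "P a" "P b"
  shows "alternates (filter P w) a b \<longleftrightarrow> alternates w a b"
proof -
  have "(\<lambda>z. P z \<and> (z = a \<or> z = b)) = (\<lambda>z. z = a \<or> z = b)" using assms by auto
  then show ?thesis by (simp add: alternates_iff_distinct_adj)
qed

lemma count_list_filter: "P v \<Longrightarrow> count_list (filter P w) v = count_list w v"
  by (induction w) auto

lemma uniform_filter: "uniform k w \<Longrightarrow> uniform k (filter P w)"
  by (simp add: uniform_def count_list_filter)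

lemma represents_induced_subgraph:
  assumes "represents V E w" and "U \<subseteq> V"
    and "\<And>a b. a \<in> U \<Longrightarrow> b \<in> U \<Longrightarrow> E' a b \<longleftrightarrow> E a b"
  shows "represents U E' (filter (\<lambda>c. c \<in> U) w)"
  using assms unfolding represents_def by (auto simp: alternates_filter subset_iff)

lemma k_word_representable_induced_subgraph:
  assumes "k_word_representable k V E" and "U \<subseteq> V"
    and "\<And>a b. a \<in> U \<Longrightarrow> b \<in> U \<Longrightarrow> E' a b \<longleftrightarrow> E a b"
  shows "k_word_representable k U E'"
  using assms represents_induced_subgraph uniform_filter
  unfolding k_word_representable_def by blast

fun insert_after :: "'a \<Rightarrow> 'a \<Rightarrow> 'a list \<Rightarrow> 'a list" where
  "insert_after x y [] = []"
| "insert_after x y (c # cs) =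
     (if c = x then x # y # insert_after x y cs else c # insert_after x y cs)"

lemma set_insert_after: "set (insert_after x y w) = set w \<union> (if x \<in> set w then {y} else {})"
  by (induction w) auto

lemma filter_insert_after: "\<not> P y \<Longrightarrow> filter P (insert_after x y w) = filter P w"
  by (induction w) auto

lemma filter_insert_after_pair:
  "y \<notin> set w \<Longrightarrow> x \<noteq> y \<Longrightarrow>
   filter (\<lambda>z. z = x \<or> z = y) (insert_after x y w) = concat (replicate (count_list w x) [x, y])"
  by (induction w) auto

lemma count_list_insert_after:
  "count_list (insert_after x y w) v = count_list w v + (if v = y then count_list w x else 0)"
  by (induction w) auto

lemma filter_pair_notin: "y \<notin> set w \<Longrightarrow> filter (\<lambda>z. z = x \<or> z = y) w = replicate (count_list w x) x"
  by (induction w) auto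

lemma distinct_adj_alternating:
  assumes "x \<noteq> y" "m \<le> 1"
  shows "distinct_adj (y # concat (replicate n [x, y]) @ replicate m x)"
  using assms by (induction n) (auto simp: le_Suc_eq)

lemma represents_add_edge:
  assumes sg: "simple_graph V E" and rep: "represents V E w" and y: "y \<notin> V"
    and set_w': "set w' = insert y V" and restrict: "filter (\<lambda>c. c \<in> V) w' = w"
    and alt_xy: "alternates w' x y"
    and not_alt: "\<And>z. z \<in> V \<Longrightarrow> z \<noteq> x \<Longrightarrow> \<not> alternates w' y z"
  shows "represents (insert y V) (add_edge E x y) w'"
  unfolding represents_def
proof (intro conjI ballI impI)
  have no_edge: "\<not> E y z" "\<not> E z y" for z
    using sg y unfolding simple_graph_def by blast+
  have at_y: "alternates w' y b \<longleftrightarrow> b = x" if "b \<in> V" for b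
    using that alt_xy not_alt alternates_commute[of w' x y] by blast
  have edge_y: "add_edge E x y y b \<longleftrightarrow> b = x" "add_edge E x y b y \<longleftrightarrow> b = x"
    if "b \<noteq> y" for b
    using that no_edge by (auto simp: add_edge_def)
  fix a b assume a: "a \<in> insert y V" and b: "b \<in> insert y V" and "a \<noteq> b"
  show "alternates w' a b \<longleftrightarrow> add_edge E x y a b"
  proof (cases "a = y \<or> b = y")
    case True
    then consider "a = y" "b \<in> V" | "b = y" "a \<in> V" using a b \<open>a \<noteq> b\<close> by auto
    then show ?thesis
      using at_y edge_y \<open>a \<noteq> b\<close> alternates_commute[of w' a b] by cases auto
  next
    case False
    then have "a \<in> V" "b \<in> V" using a b by auto
    then have "alternates w' a b \<longleftrightarrow> alternates w a b"
      using restrict alternates_filter[of "\<lambda>c. c \<in> V"] by metis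
    also have "\<dots> \<longleftrightarrow> E a b" using rep \<open>a \<in> V\<close> \<open>b \<in> V\<close> \<open>a \<noteq> b\<close> by (simp add: represents_def)
    finally show ?thesis using False by (simp add: add_edge_def)
  qed
qed (use set_w' in simp)

text \<open>\<open>t\<close> contains \<open>x\<close> at most once, so that the \<open>x,y\<close>-subword
\<open>y (x y)\<^sup>n x\<^sup>m\<close> of the new word has \<open>m \<le> 1\<close>.\<close>
lemma represents_pendant_word:
  assumes sg: "simple_graph V E" and rep: "represents V E (a @ x # s @ t)"
    and "x \<notin> set a" and "count_list t x \<le> 1" and y: "y \<notin> V"
  shows "represents (insert y V) (add_edge E x y) (a @ y # insert_after x y (x # s) @ t)"
proof (rule represents_add_edge[OF sg rep y])
  let ?w' = "a @ y # insert_after x y (x # s) @ t"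
  have set_w: "set (a @ x # s @ t) = V" using rep by (simp add: represents_def)
  then have "x \<noteq> y" "y \<notin> set a" "y \<notin> set s" "y \<notin> set t" using y by auto
  show "set ?w' = insert y V" using set_w by (auto simp: set_insert_after)
  have "filter (\<lambda>c. c \<in> V) ?w' = filter (\<lambda>c. c \<in> V) (a @ x # s @ t)"
    using y by (simp add: filter_insert_after)
  also have "\<dots> = a @ x # s @ t" using set_w by (auto intro: filter_True)
  finally show "filter (\<lambda>c. c \<in> V) ?w' = a @ x # s @ t" .

  have "filter (\<lambda>z. z = x \<or> z = y) ?w' =
        y # concat (replicate (Suc (count_list s x)) [x, y]) @ replicate (count_list t x) x"
    using \<open>x \<notin> set a\<close> \<open>x \<noteq> y\<close> \<open>y \<notin> set a\<close> \<open>y \<notin> set s\<close> \<open>y \<notin> set t\<close>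
    by (simp add: filter_insert_after_pair filter_pair_notin filter_empty_conv)
  then show "alternates ?w' x y"
    using \<open>x \<noteq> y\<close> distinct_adj_alternating[OF \<open>x \<noteq> y\<close> \<open>count_list t x \<le> 1\<close>]
    by (simp add: alternates_iff_distinct_adj)
  show "\<not> alternates ?w' y z" if "z \<noteq> x" for z
    \<comment> \<open>the letters \<open>y x y\<close> contribute \<open>y y\<close> to the \<open>y,z\<close>-subword\<close>
    using that \<open>x \<noteq> y\<close> by (auto simp: alternates_iff_distinct_adj distinct_adj_append_iff)
qed

lemma word_representable_add_pendant:
  assumes "simple_graph V E" and "word_representable V E" and "x \<in> V" and "y \<notin> V"
  shows "word_representable (insert y V) (add_edge E x y)"
proof -
  obtain w where rep: "represents V E w" using assms(2) by (auto simp: word_representable_def)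
  then have "x \<in> set w" using assms(3) by (simp add: represents_def)
  then obtain a s where "w = a @ x # s" "x \<notin> set a" using split_list_first by metis
  then have "represents (insert y V) (add_edge E x y) (a @ y # insert_after x y (x # s) @ [])"
    using represents_pendant_word[OF assms(1) _ _ _ assms(4), of a x s "[]"] rep by simp
  then show ?thesis unfolding word_representable_def by blast
qed

lemma k_word_representable_add_pendant:
  assumes sg: "simple_graph V E" and "k_word_representable k V E" and "2 \<le> k"
    and "x \<in> V" and y: "y \<notin> V"
  shows "k_word_representable k (insert y V) (add_edge E x y)"
proof -
  obtain w where uni: "uniform k w" and rep: "represents V E w"
    using assms(2) by (auto simp: k_word_representable_def)
  have set_w: "set w = V" using rep by (simp add: represents_def)
  have count_x: "count_list w x = k" using uni assms(4) set_w by (simp add: uniform_def)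
  obtain a r where ar: "w = a @ x # r" "x \<notin> set a" using split_list_first assms(4) set_w by metis
  then have "x \<in> set r" using count_x \<open>2 \<le> k\<close> count_list_0_iff[of r x] by auto
  then obtain s c where sc: "r = s @ x # c" "x \<notin> set c" using split_list_last by metis
  define w' where "w' = a @ y # insert_after x y (x # s) @ x # c"
  have rep': "represents (insert y V) (add_edge E x y) w'"
    unfolding w'_def using represents_pendant_word[OF sg _ ar(2) _ y] rep ar sc by simp
  have "y \<notin> set w" using y set_w by simp
  then have "count_list w' v = (if v = y then count_list w x else count_list w v)" for v
    using ar sc unfolding w'_def by (auto simp: count_list_insert_after)
  moreover have "set w' = insert y (set w)"
    using rep' set_w by (simp add: represents_def)
  ultimately have "uniform k w'"
    using uni count_x by (auto simp: uniform_def)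
  with rep' show ?thesis unfolding k_word_representable_def by blast
qed

lemma rep_number_add_pendant:
  assumes "simple_graph V E" and "2 \<le> rep_number V E" and "x \<in> V" and "y \<notin> V"
  shows "rep_number (insert y V) (add_edge E x y) = rep_number V E"
proof -
  have "k_word_representable j (insert y V) (add_edge E x y) \<longleftrightarrow> k_word_representable j V E" for j
  proof
    assume "k_word_representable j (insert y V) (add_edge E x y)"
    then show "k_word_representable j V E"
      by (rule k_word_representable_induced_subgraph) (use \<open>y \<notin> V\<close> in \<open>auto simp: add_edge_def\<close>)
  next
    assume kj: "k_word_representable j V E"
    then have "rep_number V E \<le> j" unfolding rep_number_def by (rule Least_le)
    then show "k_word_representable j (insert y V) (add_edge E x y)"
      using k_word_representable_add_pendant[OF assms(1) kj _ assms(3,4)] assms(2) by simp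
  qed
  then show ?thesis unfolding rep_number_def by simp
qed

theorem proposition6:
  fixes V :: "'a set" and E :: "'a \<Rightarrow> 'a \<Rightarrow> bool" and k :: nat and x y :: 'a
  assumes "k \<ge> 2"
    and "simple_graph V E"
    and "in_R k V E"
    and "x \<in> V"
    and "y \<notin> V"
  shows "in_R k (insert y V)
           (\<lambda>a b. E a b \<or> (a = x \<and> b = y) \<or> (a = y \<and> b = x))"
proof -
  have "word_representable V E" and "rep_number V E = k"
    using \<open>in_R k V E\<close> by (auto simp: in_R_def)
  then show ?thesis
    using word_representable_add_pendant[OF assms(2) _ assms(4,5)]
      rep_number_add_pendant[OF assms(2) _ assms(4,5)] \<open>k \<ge> 2\<close>
    by (simp add: in_R_def add_edge_def)
qed

end
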